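(* Let $(X,d)$ be a metric space, $\mu$ a Borel probability measure on $X$ with no atoms, and $T:X\to X$ a measurable map preserving $\mu$. (i) Suppose that every decreasing sequence of balls $B(y,r_1)\supseteq B(y,r_2)\supseteq\cdots$ in $X$ with a common center $y$ and with $\sum_n\mu(B(y,r_n))=\infty$ satisfies $\mu(\limsup_n T^{-n}B(y,r_n))=1$. Then for every $y\in X$, $$\liminf_{r\to 0}\frac{\log\tau_{B(y,r)}(x)}{-\log\mu(B(y,r))}=1\quad\text{for }\mu\text{-a.e. }x.$$ (ii) Let $B(y,r)=\{x: d(x,y)\le r\}$ denote the closed ball. Suppose that every decreasing sequence of closed balls $A_n=B(y,r_n)$ with a common center $y$ and with $\sum_n\mu(A_n)=\infty$ is strongly Borel–Cantelli. Then for every $y\in X$, $$\lim_{r\to 0}\frac{\log\tau_{B(y,r)}(x)}{-\log\mu(B(y,r))}=1\quad\text{for }\mu\text{-a.e. }x.$$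
   Context: $\tau_A(x)=\min\{n\in\mathbf N: T^n(x)\in A\}$ (with $\tau_A(x)=\infty$ if no such $n$). $\limsup_n S_n$ denotes the set of points belonging to infinitely many $S_n$. A sequence of sets $A_n\subseteq X$ is strongly Borel–Cantelli (SBC) if for $\mu$-a.e. $x$, $\frac{\sum_{n=1}^N 1_{T^{-n}A_n}(x)}{\sum_{n=1}^N\mu(A_n)}\to 1$ as $N\to\infty$, where $1_A$ is the indicator function of $A$. *)

theory Defs
  imports "HOL-Probability.Probability"
begin

definition hit_time :: "('a \<Rightarrow> 'a) \<Rightarrow> 'a set \<Rightarrow> 'a \<Rightarrow> enat" where
  "hit_time T A x =
     (if \<exists>n\<ge>1. (T ^^ n) x \<in> A then enat (LEAST n. n \<ge> 1 \<and> (T ^^ n) x \<in> A) else \<infinity>)"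

definition hit_ratio :: "'a measure \<Rightarrow> ('a \<Rightarrow> 'a) \<Rightarrow> 'a set \<Rightarrow> 'a \<Rightarrow> ereal" where
  "hit_ratio M T A x =
     (case hit_time T A x of
        enat n \<Rightarrow> ereal (ln (real n) / - ln (measure M A))
      | \<infinity> \<Rightarrow> \<infinity>)"

definition strongly_BC :: "'a measure \<Rightarrow> ('a \<Rightarrow> 'a) \<Rightarrow> (nat \<Rightarrow> 'a set) \<Rightarrow> bool" where
  "strongly_BC M T A \<longleftrightarrow>
     (AE x in M. ((\<lambda>N. (\<Sum>n\<in>{1..N}. indicator ((T ^^ n) -` A n) x :: real)
                      / (\<Sum>n\<in>{1..N}. measure M (A n))) \<longlonglongrightarrow> 1))"

end

theory Submission
  imports Defs "HOL-Library.Discrete_Functions"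
begin

text \<open>
  Lower bound: by invariance and a union bound, the set where a set of measure \<open>t\<close> is hit
  before time \<open>K\<close> has measure at most \<open>K t\<close>. Applying this to the union of all balls of
  measure at most \<open>2 ^ (- p k)\<close> and the time \<open>2 ^ ((p - 1) k)\<close>, the first Borel--Cantelli
  lemma shows that almost surely the hitting time of \<open>B(y, r)\<close> exceeds
  \<open>\<mu>(B(y, r)) ^ (- (1 - 2 / p))\<close> for all small \<open>r\<close>.

  Upper bounds: choose radii \<open>r\<^sub>n\<close> decreasing so slowly that \<open>\<Sum> \<mu>(B(y, r\<^sub>n))\<close> diverges, but
  with \<open>\<mu>(B(y, r\<^sub>n))\<close> at most about \<open>n ^ (- p / (p + 1))\<close>. A visit \<open>T\<^sup>n x \<in> B(y, r\<^sub>n)\<close>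
  gives \<open>\<tau> \<le> n\<close> and hence a ratio of at most about \<open>1 + 1 / p\<close>. In (i) such visits occur
  infinitely often, which bounds the \<open>liminf\<close>. In (ii) the radii are constant on the dyadic
  blocks of times \<open>[2 ^ ((p + 1) k), 2 ^ ((p + 1) (k + 1)))\<close>, and the strong Borel--Cantelli
  property forces a visit in every block, which controls all small radii at once. Finally
  let \<open>p \<rightarrow> \<infinity>\<close>.
\<close>

section \<open>Hitting times\<close>

lemma hit_time_le_enat_iff:
  "hit_time T A x \<le> enat K \<longleftrightarrow> (\<exists>n. 1 \<le> n \<and> n \<le> K \<and> (T ^^ n) x \<in> A)"
proof
  assume le: "hit_time T A x \<le> enat K"
  then have ex: "\<exists>n\<ge>1. (T ^^ n) x \<in> A"
    unfolding hit_time_def by (auto split: if_splits)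
  define n where "n = (LEAST n. n \<ge> 1 \<and> (T ^^ n) x \<in> A)"
  have "n \<ge> 1 \<and> (T ^^ n) x \<in> A"
    unfolding n_def by (rule LeastI_ex) (use ex in blast)
  moreover have "n \<le> K"
    using le ex unfolding hit_time_def n_def by simp
  ultimately show "\<exists>n. 1 \<le> n \<and> n \<le> K \<and> (T ^^ n) x \<in> A" by blast
next
  assume "\<exists>n. 1 \<le> n \<and> n \<le> K \<and> (T ^^ n) x \<in> A"
  then obtain n where n: "1 \<le> n" "n \<le> K" "(T ^^ n) x \<in> A" by blast
  have "(LEAST n. n \<ge> 1 \<and> (T ^^ n) x \<in> A) \<le> n"
    using n by (intro Least_le) simp
  then show "hit_time T A x \<le> enat K"
    using n unfolding hit_time_def by auto
qed

lemma hit_time_antimono: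
  assumes "A \<subseteq> A'"
  shows "hit_time T A' x \<le> hit_time T A x"
proof (cases "hit_time T A x")
  case (enat K)
  then have "\<exists>n. 1 \<le> n \<and> n \<le> K \<and> (T ^^ n) x \<in> A"
    using hit_time_le_enat_iff[of T A x K] by simp
  with assms have "hit_time T A' x \<le> enat K"
    unfolding hit_time_le_enat_iff by blast
  then show ?thesis using enat by simp
qed simp

lemma hit_time_ge_1: "hit_time T A x = enat m \<Longrightarrow> 1 \<le> m"
  using hit_time_le_enat_iff[of T A x m] by auto

lemma hit_ratio_enat:
  "hit_time T A x = enat m \<Longrightarrow> hit_ratio M T A x = ereal (ln (real m) / - ln (measure M A))"
  unfolding hit_ratio_def by simp

lemma hit_ratio_infinity: "hit_time T A x = \<infinity> \<Longrightarrow> hit_ratio M T A x = \<infinity>"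
  unfolding hit_ratio_def by simp

lemma nat_crossing:
  assumes "\<not> P K" "K \<le> n" "P n"
  shows "\<exists>k\<ge>K. \<not> P k \<and> P (Suc k)"
proof (rule ccontr)
  assume "\<not> ?thesis"
  then have step: "\<not> P (Suc k)" if "K \<le> k" "\<not> P k" for k
    using that by blast
  have "\<not> P (K + i)" for i
    by (induction i) (use assms(1) step in auto)
  from this[of "n - K"] assms(2,3) show False by simp
qed

lemma dyadic_eventually_less:
  fixes c :: real
  assumes "0 < c" "0 < p"
  shows "\<exists>n\<ge>K. 1 / 2 ^ (p * n) < c"
proof -
  obtain n where n: "1 / c < 2 ^ n" using real_arch_pow[of 2 "1 / c"] by auto
  have "n \<le> p * max n K"
    using assms(2) by (cases p) auto
  then have "(2::real) ^ n \<le> 2 ^ (p * max n K)"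
    by (intro power_increasing) auto
  with n have "1 / c < 2 ^ (p * max n K)" by linarith
  with assms(1) have "1 / 2 ^ (p * max n K) < c"
    by (simp add: field_simps)
  then show ?thesis by (intro exI[of _ "max n K"]) simp
qed

lemma dyadic_bracket_lt:
  fixes c :: real
  assumes "0 < c" "0 < p" "c \<le> 1 / 2 ^ (p * K)"
  shows "\<exists>k\<ge>K. 1 / 2 ^ (p * (k + 1)) < c \<and> c \<le> 1 / 2 ^ (p * k)"
proof -
  obtain n where n: "K \<le> n" "1 / 2 ^ (p * n) < c" using dyadic_eventually_less assms by blast
  have "\<not> 1 / 2 ^ (p * K) < c" using assms(3) by simp
  from nat_crossing[of "\<lambda>k. 1 / 2 ^ (p * k) < c", OF this n]
  obtain k where "K \<le> k" "\<not> 1 / 2 ^ (p * k) < c" "1 / 2 ^ (p * Suc k) < c" by blast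
  then show ?thesis by (intro exI[of _ k]) simp
qed

lemma dyadic_bracket_le:
  fixes c :: real
  assumes "0 < c" "0 < p" "c < 1 / 2 ^ (p * K)"
  shows "\<exists>k\<ge>K. 1 / 2 ^ (p * (k + 1)) \<le> c \<and> c < 1 / 2 ^ (p * k)"
proof -
  obtain n where n: "K \<le> n" "1 / 2 ^ (p * n) \<le> c"
    using dyadic_eventually_less assms less_imp_le by blast
  have "\<not> 1 / 2 ^ (p * K) \<le> c" using assms(3) by simp
  from nat_crossing[of "\<lambda>k. 1 / 2 ^ (p * k) \<le> c", OF this n]
  obtain k where "K \<le> k" "\<not> 1 / 2 ^ (p * k) \<le> c" "1 / 2 ^ (p * Suc k) \<le> c" by blast
  then show ?thesis by (intro exI[of _ k]) simp
qed

lemma suminf_ennreal_eq_top_if_unbounded: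
  fixes g :: "nat \<Rightarrow> real"
  assumes "\<And>n. 0 \<le> g n" and "\<And>b. \<exists>N. b < (\<Sum>n<N. g n)"
  shows "(\<Sum>n. ennreal (g n)) = \<infinity>"
proof (rule ccontr)
  assume "(\<Sum>n. ennreal (g n)) \<noteq> \<infinity>"
  then have "summable g" using summable_suminf_not_top[of g] assms(1) by simp
  then have "(\<Sum>n<N. g n) \<le> suminf g" for N
    using assms(1) by (intro sum_le_suminf) auto
  then show False using assms(2) not_less by blast
qed

lemma cofinal_incseq_in_downset:
  fixes P :: "real set"
  assumes "P \<noteq> {}" and down: "\<And>r s. r \<in> P \<Longrightarrow> s \<le> r \<Longrightarrow> s \<in> P"
  shows "\<exists>s::nat \<Rightarrow> real. incseq s \<and> range s \<subseteq> P \<and> (\<forall>r\<in>P. \<exists>n. r \<le> s n)"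
proof (cases "bdd_above P")
  case False
  have "real n \<in> P" for n
  proof -
    from False obtain r where "r \<in> P" "real n < r" unfolding bdd_above_def by (meson not_le)
    then show ?thesis using down by auto
  qed
  moreover have "\<exists>n. r \<le> real n" for r :: real
    using real_nat_ceiling_ge by blast
  ultimately show ?thesis
    by (intro exI[of _ real]) (auto simp: incseq_def)
next
  case bdd: True
  show ?thesis
  proof (cases "Sup P \<in> P")
    case True
    then show ?thesis
      using bdd by (intro exI[of _ "\<lambda>_. Sup P"]) (auto simp: incseq_def cSup_upper)
  next
    case False
    define s where "s n = Sup P - 1 / (real n + 1)" for n
    have "s n \<in> P" for n
    proof -
      have "s n < Sup P" unfolding s_def by simp
      then obtain r where "r \<in> P" "s n < r" using less_cSup_iff[OF assms(1) bdd] by blast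
      then show ?thesis using down by auto
    qed
    moreover have "incseq s"
      unfolding incseq_def s_def by (auto intro!: divide_left_mono)
    moreover have "\<exists>n. r \<le> s n" if "r \<in> P" for r
    proof -
      have "r < Sup P"
        using that False bdd cSup_upper[of r P] by (metis order_le_less)
      then obtain n where "inverse (real (Suc n)) < Sup P - r"
        using reals_Archimedean by (metis diff_gt_0_iff_gt)
      then show ?thesis
        unfolding s_def by (intro exI[of _ n]) (simp add: inverse_eq_divide add.commute)
    qed
    ultimately show ?thesis by blast
  qed
qed

lemma frequently_filterlim_compose:
  assumes "filterlim f F G" and "\<exists>\<^sub>F x in G. P (f x)"
  shows "\<exists>\<^sub>F y in F. P y"
proof -
  have "eventually (\<lambda>x. \<not> P (f x)) G" if "eventually (\<lambda>y. \<not> P y) F"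
    using assms(1) that unfolding filterlim_iff by blast
  with assms(2) show ?thesis unfolding frequently_def by blast
qed

lemma eventually_bounds_of_ratio_tendsto_1:
  fixes a b :: "nat \<Rightarrow> real"
  assumes "(\<lambda>N. a N / b N) \<longlonglongrightarrow> 1" and "eventually (\<lambda>N. 0 < b N) sequentially" and "0 < \<delta>"
  shows "eventually (\<lambda>N. (1 - \<delta>) * b N < a N \<and> a N < (1 + \<delta>) * b N) sequentially"
  using assms(2) tendstoD[OF assms(1,3)]
proof eventually_elim
  case (elim N)
  then have "1 - \<delta> < a N / b N" "a N / b N < 1 + \<delta>" unfolding dist_real_def by auto
  with elim(1) show ?case by (simp add: less_divide_eq divide_less_eq)
qed

lemma Liminf_le_if_frequently:
  fixes f :: "_ \<Rightarrow> 'b::complete_linorder"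
  assumes "\<exists>\<^sub>F x in F. f x \<le> c"
  shows "Liminf F f \<le> c"
  unfolding Liminf_def
proof (rule SUP_least)
  fix P
  assume "P \<in> {P. eventually P F}"
  then have "\<exists>\<^sub>F x in F. P x \<and> f x \<le> c" using frequently_eventually_conj[OF assms] by auto
  then obtain x where "P x" "f x \<le> c" using frequently_ex by blast
  then show "(INF x\<in>Collect P. f x) \<le> c" by (intro INF_lower2) auto
qed

lemma tendsto_if_le_Liminf_Limsup_le:
  fixes f :: "_ \<Rightarrow> 'a::{complete_linorder,linorder_topology}"
  assumes "\<not> trivial_limit F" and "c \<le> Liminf F f" and "Limsup F f \<le> c"
  shows "(f \<longlongrightarrow> c) F"
proof (rule Liminf_eq_Limsup[OF assms(1)])
  have le: "Liminf F f \<le> Limsup F f" by (rule Liminf_le_Limsup[OF assms(1)])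
  show "Liminf F f = c" by (rule antisym[OF order.trans[OF le assms(3)] assms(2)])
  show "Limsup F f = c" by (rule antisym[OF assms(3) order.trans[OF assms(2) le]])
qed

lemma ex_nat_ge_2_divide_less:
  fixes c e :: real
  assumes "0 < e"
  shows "\<exists>p::nat. 2 \<le> p \<and> c / real p < e"
proof -
  obtain n :: nat where "c / e < real n" using reals_Archimedean2 by blast
  then have "c < real (n + 2) * e" using assms by (simp add: divide_less_eq algebra_simps)
  then show ?thesis using assms by (intro exI[of _ "n + 2"]) (simp add: divide_less_eq mult.commute)
qed

lemma ereal_le_if_le_plus_inverse:
  fixes L :: ereal and a c :: real
  assumes "\<And>p::nat. 1 \<le> p \<Longrightarrow> L \<le> ereal (a + c / real p)"
  shows "L \<le> ereal a"
proof (rule ereal_le_epsilon2)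
  fix e :: real
  assume "0 < e"
  then obtain p :: nat where "2 \<le> p" "c / real p < e" using ex_nat_ge_2_divide_less by blast
  then have "L \<le> ereal (a + c / real p)" "a + c / real p \<le> a + e" using assms by auto
  then show "L \<le> ereal a + ereal e" by (simp add: order_trans)
qed

lemma ereal_ge_if_ge_minus_inverse:
  fixes L :: ereal and a c :: real
  assumes "\<And>p::nat. 2 \<le> p \<Longrightarrow> ereal (a - c / real p) \<le> L"
  shows "ereal a \<le> L"
proof (rule ereal_le_epsilon2)
  fix e :: real
  assume "0 < e"
  then obtain p :: nat where "2 \<le> p" "c / real p < e" using ex_nat_ge_2_divide_less by blast
  then have "ereal (a - c / real p) + ereal e \<le> L + ereal e"
    using assms by (intro add_right_mono) auto
  moreover have "ereal a \<le> ereal (a - c / real p) + ereal e"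
    using \<open>c / real p < e\<close> by simp
  ultimately show "ereal a \<le> L + ereal e" by (rule order_trans[rotated])
qed

lemma Inter_cball_shrinking: "(\<Inter>n. cball y (s + 1 / (real n + 1))) = cball y s"
proof
  show "cball y s \<subseteq> (\<Inter>n. cball y (s + 1 / (real n + 1)))"
    by (auto intro!: add_increasing2)
  show "(\<Inter>n. cball y (s + 1 / (real n + 1))) \<subseteq> cball y s"
  proof
    fix x
    assume x: "x \<in> (\<Inter>n. cball y (s + 1 / (real n + 1)))"
    show "x \<in> cball y s"
    proof (rule ccontr)
      assume "x \<notin> cball y s"
      then obtain n where "inverse (real (Suc n)) < dist y x - s"
        using reals_Archimedean[of "dist y x - s"] by auto
      then have "s + 1 / (real n + 1) < dist y x" by (simp add: inverse_eq_divide add.commute)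
      with x show False by (auto simp: not_le[symmetric])
    qed
  qed
qed

lemma (in finite_measure) measure_Union_sublevel:
  fixes B :: "real \<Rightarrow> 'a set"
  assumes sets_B: "\<And>r. B r \<in> sets M" and mono: "\<And>r s. r \<le> s \<Longrightarrow> B r \<subseteq> B s"
    and "0 \<le> t"
  shows "\<Union>{B r |r. measure M (B r) \<le> t} \<in> sets M"
    and "measure M (\<Union>{B r |r. measure M (B r) \<le> t}) \<le> t"
proof -
  define U where "U = \<Union>{B r |r. measure M (B r) \<le> t}"
  define P where "P = {r. measure M (B r) \<le> t}"
  have U_eq: "U = (\<Union>r\<in>P. B r)" unfolding U_def P_def by auto
  have "U \<in> sets M \<and> measure M U \<le> t"
  proof (cases "P = {}")
    case True
    then show ?thesis using \<open>0 \<le> t\<close> unfolding U_eq by simp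
  next
    case False
    have "s \<in> P" if "r \<in> P" "s \<le> r" for r s
      using that mono[of s r] sets_B finite_measure_mono[of "B s" "B r"] unfolding P_def by force
    then obtain s where s: "incseq s" "range s \<subseteq> P" "\<And>r. r \<in> P \<Longrightarrow> \<exists>n. r \<le> s n"
      using cofinal_incseq_in_downset[OF False] by blast
    have "U = (\<Union>n. B (s n))"
      unfolding U_eq using s(2) by (auto dest!: s(3) intro: mono[THEN subsetD])
    moreover have "(\<lambda>n. measure M (B (s n))) \<longlonglongrightarrow> measure M (\<Union>n. B (s n))"
      using s(1) mono sets_B by (intro finite_Lim_measure_incseq) (auto simp: incseq_def)
    then have "measure M (\<Union>n. B (s n)) \<le> t"
      by (rule LIMSEQ_le_const2) (use s(2) P_def in auto)
    ultimately show ?thesis using sets_B by auto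
  qed
  then show "U \<in> sets M" "measure M U \<le> t" by auto
qed

lemma (in finite_measure) measure_tendsto_0_at_right_0:
  fixes B :: "real \<Rightarrow> 'a set"
  assumes sets_B: "\<And>r. B r \<in> sets M" and mono: "\<And>r s. r \<le> s \<Longrightarrow> B r \<subseteq> B s"
    and null: "measure M (\<Inter>n. B (1 / (real n + 1))) = 0"
  shows "((\<lambda>r. measure M (B r)) \<longlongrightarrow> 0) (at_right 0)"
proof (rule order_tendstoI)
  fix a :: real
  assume "a < 0"
  then show "eventually (\<lambda>r. a < measure M (B r)) (at_right 0)"
    by (intro always_eventually) (auto intro: less_le_trans)
next
  fix b :: real assume "0 < b"
  have "decseq (\<lambda>n. B (1 / (real n + 1)))"
    unfolding decseq_def by (auto intro!: mono divide_left_mono)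
  then have lim: "(\<lambda>n. measure M (B (1 / (real n + 1)))) \<longlonglongrightarrow> 0"
    using finite_Lim_measure_decseq[of "\<lambda>n. B (1 / (real n + 1))"] sets_B null by auto
  obtain n where n: "measure M (B (1 / (real n + 1))) < b"
    using order_tendstoD(2)[OF lim \<open>0 < b\<close>] unfolding eventually_sequentially by blast
  have "measure M (B r) < b" if "0 < r" "r < 1 / (real n + 1)" for r
    using that n finite_measure_mono[OF mono sets_B, of r "1 / (real n + 1)"] by simp
  then show "eventually (\<lambda>r. measure M (B r) < b) (at_right 0)"
    unfolding eventually_at_right_field by (intro exI[of _ "1 / (real n + 1)"]) auto
qed

lemma ln_ratio_gt_of_dyadic:
  fixes p k m :: nat and c :: real
  assumes p: "2 \<le> p" and k: "p \<le> k" and m: "2 ^ ((p - 1) * k) < m"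
    and c: "1 / 2 ^ (p * (k + 1)) < c" "c \<le> 1 / 2 ^ (p * k)"
  shows "1 - 2 / real p < ln (real m) / - ln c"
proof -
  have "0 < 1 / (2::real) ^ (p * (k + 1))" by simp
  with c(1) have c0: "0 < c" by linarith
  have ln2: "0 < ln (2::real)" by simp
  have "ln (real (2 ^ ((p - 1) * k))) < ln (real m)"
    using m by (intro ln_less_cancel_iff[THEN iffD2]) auto
  then have ln_m: "(real p - 1) * real k * ln 2 < ln (real m)"
    using p by (simp add: ln_realpow of_nat_diff)
  have "ln (1 / 2 ^ (p * (k + 1))) < ln c"
    using c(1) c0 by (intro ln_less_cancel_iff[THEN iffD2]) auto
  then have ln_c_upper: "- ln c < real p * (real k + 1) * ln 2"
    by (simp add: ln_div ln_realpow algebra_simps)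
  have "ln c \<le> ln (1 / 2 ^ (p * k))"
    using c(2) c0 by (intro ln_le_cancel_iff[THEN iffD2]) auto
  then have "real p * real k * ln 2 \<le> - ln c"
    by (simp add: ln_div ln_realpow)
  moreover have "0 < real p * real k * ln 2" using p k ln2 by simp
  ultimately have pos: "0 < - ln c" by linarith
  have "(1 - 2 / real p) * (- ln c) \<le> (1 - 2 / real p) * (real p * (real k + 1) * ln 2)"
    using ln_c_upper p by (intro mult_left_mono) (auto simp: field_simps)
  also have "\<dots> = (real p - 2) * (real k + 1) * ln 2"
    using p by (simp add: field_simps)
  also have "\<dots> \<le> (real p - 1) * real k * ln 2"
    using k ln2 by (intro mult_right_mono) (auto simp: algebra_simps)
  also have "\<dots> < ln (real m)" by (fact ln_m)
  finally show ?thesis unfolding pos_less_divide_eq[OF pos] .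
qed

lemma ln_ratio_le_of_power_bound:
  fixes c :: real and p m n :: nat
  assumes c: "0 < c" and p: "1 \<le> p" and m: "1 \<le> m" "m \<le> n"
    and bound: "c ^ (p + 1) * (real n + 1) ^ p \<le> 1"
  shows "ln (real m) / - ln c \<le> 1 + 1 / real p"
proof -
  have "c < 1"
  proof (rule ccontr)
    assume "\<not> c < 1"
    then have "1 \<le> c ^ (p + 1)" by (intro one_le_power) simp
    moreover have "1 < (real n + 1) ^ p" using m p by (simp add: one_less_power)
    moreover have "1 * (real n + 1) ^ p \<le> c ^ (p + 1) * (real n + 1) ^ p"
      using calculation(1) by (intro mult_right_mono) auto
    ultimately have "1 < c ^ (p + 1) * (real n + 1) ^ p" by linarith
    with bound show False by simp
  qed
  with c have ln_c: "ln c < 0" by simp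
  have "ln (c ^ (p + 1) * (real n + 1) ^ p) \<le> 0"
    using bound c by (simp add: ln_le_zero_iff)
  then have "real (p + 1) * ln c + real p * ln (real n + 1) \<le> 0"
    using c by (simp add: ln_mult ln_realpow algebra_simps)
  moreover have "real p * ln (real m) \<le> real p * ln (real n + 1)"
    using m by (intro mult_left_mono) auto
  ultimately have "real p * ln (real m) \<le> (real p + 1) * (- ln c)"
    by (simp add: algebra_simps)
  then show ?thesis
    using ln_c p by (simp add: divide_le_eq field_simps)
qed

lemma ln_ratio_lt_of_dyadic:
  fixes p k m :: nat and c :: real
  assumes p: "1 \<le> p" and k: "2 * p + 2 \<le> k" and m: "1 \<le> m" "m < 2 ^ ((p + 1) * (k + 2))"
    and c: "0 < c" "c < 1 / 2 ^ (p * k)"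
  shows "ln (real m) / - ln c < 1 + 2 / real p"
proof -
  have ln2: "0 < ln (2::real)" by simp
  have "real m < 2 ^ ((p + 1) * (k + 2))"
    using m(2) by (metis of_nat_less_numeral_power_cancel_iff)
  then have "ln (real m) < ln (2 ^ ((p + 1) * (k + 2)))"
    using m(1) by (intro ln_less_cancel_iff[THEN iffD2]) auto
  moreover have "ln ((2::real) ^ ((p + 1) * (k + 2))) = real (p + 1) * (real k + 2) * ln 2"
    by (simp only: ln_realpow) (simp add: algebra_simps)
  ultimately have ln_m: "ln (real m) < real (p + 1) * (real k + 2) * ln 2"
    by linarith
  have "ln c < ln (1 / 2 ^ (p * k))"
    using c by (intro ln_less_cancel_iff[THEN iffD2]) auto
  then have ln_c: "real p * real k * ln 2 < - ln c"
    by (simp add: ln_div ln_realpow)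
  have "0 \<le> real p * real k * ln 2" using ln2 by simp
  with ln_c have pos: "0 < - ln c" by linarith
  have "real (p + 1) * (real k + 2) * ln 2 \<le> (real p + 2) * real k * ln 2"
    using k ln2 by (intro mult_right_mono) (auto simp: algebra_simps)
  also have "\<dots> = (1 + 2 / real p) * (real p * real k * ln 2)"
    using p by (simp add: field_simps)
  also have "\<dots> < (1 + 2 / real p) * (- ln c)"
    using ln_c p by (intro mult_strict_left_mono) (auto intro: add_pos_nonneg)
  finally show ?thesis
    using ln_m unfolding pos_divide_less_eq[OF pos] by linarith
qed

lemma pos_of_perturbed_sums:
  fixes A S Bk HS HB \<delta> c :: real
  assumes "0 < A" "A \<le> Bk" "S \<le> c * A" "0 \<le> \<delta>" "\<delta> \<le> 1 / 2" "2 * \<delta> * c \<le> 1 / 4"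
    and "(1 - \<delta>) * (S + Bk) < HS + HB" "HS < (1 + \<delta>) * S"
  shows "0 < HB"
proof -
  have "2 * \<delta> * S \<le> 2 * \<delta> * (c * A)" using assms(3,4) by (intro mult_left_mono) auto
  also have "\<dots> = (2 * \<delta> * c) * A" by simp
  also have "\<dots> \<le> A / 4" using mult_right_mono[OF assms(6), of A] assms(1) by simp
  finally have "2 * \<delta> * S \<le> A / 4" .
  moreover have "(1 / 2) * A \<le> (1 - \<delta>) * Bk"
    using assms(1,2,5) by (intro mult_mono) auto
  moreover have "HB > (1 - \<delta>) * Bk - 2 * \<delta> * S"
    using assms(7,8) by (simp add: algebra_simps)
  ultimately show ?thesis using assms(1) by linarith
qed

section \<open>The lower bound\<close>

locale mp_system = prob_space M for M :: "'a measure" +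
  fixes T :: "'a \<Rightarrow> 'a"
  assumes space_eq_UNIV: "space M = UNIV"
    and measurable_T: "T \<in> M \<rightarrow>\<^sub>M M"
    and distr_T: "distr M M T = M"
begin

lemma measurable_funpow: "T ^^ n \<in> M \<rightarrow>\<^sub>M M"
proof (induction n)
  case (Suc n)
  have "T ^^ Suc n = T \<circ> (T ^^ n)" by simp
  then show ?case using Suc measurable_T by (metis measurable_comp)
qed simp

lemma sets_vimage_funpow: "A \<in> sets M \<Longrightarrow> (T ^^ n) -` A \<in> sets M"
  using measurable_sets[OF measurable_funpow, of A n] space_eq_UNIV by simp

lemma measure_vimage: "A \<in> sets M \<Longrightarrow> measure M (T -` A) = measure M A"
  using measure_distr[OF measurable_T, of A] distr_T space_eq_UNIV by simp

lemma measure_vimage_funpow: "A \<in> sets M \<Longrightarrow> measure M ((T ^^ n) -` A) = measure M A"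
proof (induction n arbitrary: A)
  case (Suc n)
  have eq: "(T ^^ Suc n) -` A = T -` ((T ^^ n) -` A)"
    by (simp only: funpow_Suc_right vimage_comp)
  show ?case unfolding eq using Suc measure_vimage sets_vimage_funpow by simp
qed simp

lemma measure_hit_time_le:
  assumes "A \<in> sets M"
  shows "{x. hit_time T A x \<le> enat K} \<in> sets M"
    and "measure M {x. hit_time T A x \<le> enat K} \<le> real K * measure M A"
proof -
  have eq: "{x. hit_time T A x \<le> enat K} = (\<Union>n\<in>{1..K}. (T ^^ n) -` A)"
    by (auto simp: hit_time_le_enat_iff)
  then show "{x. hit_time T A x \<le> enat K} \<in> sets M"
    using sets_vimage_funpow assms by auto
  have "measure M (\<Union>n\<in>{1..K}. (T ^^ n) -` A) \<le> (\<Sum>n\<in>{1..K}. measure M ((T ^^ n) -` A))"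
    using sets_vimage_funpow assms by (intro finite_measure_subadditive_finite) auto
  also have "\<dots> = real K * measure M A"
    using measure_vimage_funpow[OF assms] by simp
  finally show "measure M {x. hit_time T A x \<le> enat K} \<le> real K * measure M A"
    unfolding eq .
qed

lemma AE_eventually_hit_time_gt:
  assumes "\<And>k. A k \<in> sets M" and "summable (\<lambda>k. real (K k) * measure M (A k))"
  shows "AE x in M. eventually (\<lambda>k. enat (K k) < hit_time T (A k) x) sequentially"
proof -
  define W where "W k = {x. hit_time T (A k) x \<le> enat (K k)}" for k
  have "summable (\<lambda>k. measure M (W k))"
    using assms measure_hit_time_le(2) unfolding W_def
    by (intro summable_comparison_test[OF _ assms(2)]) auto
  then have "AE x in M. eventually (\<lambda>k. x \<in> space M - W k) sequentially"
    using assms(1) measure_hit_time_le(1) unfolding W_def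
    by (intro borel_cantelli_AE1) (auto simp: less_top[symmetric])
  then show ?thesis
    by (rule eventually_mono) (auto simp: W_def not_le elim!: eventually_mono)
qed

end

locale shrinking_targets = mp_system +
  fixes B :: "real \<Rightarrow> 'a set"
  assumes sets_B: "\<And>r. B r \<in> sets M"
    and B_mono: "\<And>r s. r \<le> s \<Longrightarrow> B r \<subseteq> B s"
    and measure_B_pos: "\<And>r. 0 < r \<Longrightarrow> 0 < measure M (B r)"
    and measure_B_tendsto_0: "((\<lambda>r. measure M (B r)) \<longlongrightarrow> 0) (at_right 0)"
begin

definition B_below :: "real \<Rightarrow> 'a set" where
  "B_below t = \<Union>{B r |r. measure M (B r) \<le> t}"

lemma sets_B_below: "0 \<le> t \<Longrightarrow> B_below t \<in> sets M"
  unfolding B_below_def by (rule measure_Union_sublevel(1)[OF sets_B B_mono])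

lemma measure_B_below: "0 \<le> t \<Longrightarrow> measure M (B_below t) \<le> t"
  unfolding B_below_def by (rule measure_Union_sublevel(2)[OF sets_B B_mono])

lemma B_subset_B_below: "measure M (B r) \<le> t \<Longrightarrow> B r \<subseteq> B_below t"
  unfolding B_below_def by blast

lemma AE_eventually_hit_time_B_below_gt:
  fixes p :: nat
  assumes p: "1 \<le> p"
  shows "AE x in M. eventually
    (\<lambda>k. enat (2 ^ ((p - 1) * k)) < hit_time T (B_below (1 / 2 ^ (p * k))) x) sequentially"
proof (rule AE_eventually_hit_time_gt)
  show "B_below (1 / 2 ^ (p * k)) \<in> sets M" for k
    by (rule sets_B_below) simp
  have "real (2 ^ ((p - 1) * k)) * measure M (B_below (1 / 2 ^ (p * k))) \<le> (1 / 2) ^ k" for k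
  proof -
    have "p * k = (p - 1) * k + k"
      using p by (cases p) auto
    then have "(2::real) ^ (p * k) = 2 ^ ((p - 1) * k) * 2 ^ k"
      by (metis power_add)
    then have eq: "real (2 ^ ((p - 1) * k)) * (1 / 2 ^ (p * k)) = (1 / 2) ^ k"
      by (simp add: power_one_over)
    have "real (2 ^ ((p - 1) * k)) * measure M (B_below (1 / 2 ^ (p * k)))
        \<le> real (2 ^ ((p - 1) * k)) * (1 / 2 ^ (p * k))"
      by (intro mult_left_mono measure_B_below) auto
    then show ?thesis unfolding eq .
  qed
  then show "summable (\<lambda>k. real (2 ^ ((p - 1) * k)) * measure M (B_below (1 / 2 ^ (p * k))))"
    by (intro summable_comparison_test[OF _ summable_geometric[of "1 / 2"]]) auto
qed

lemma eventually_hit_ratio_gt: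
  fixes p :: nat
  assumes p: "2 \<le> p"
    and K: "\<And>k. K \<le> k \<Longrightarrow> enat (2 ^ ((p - 1) * k)) < hit_time T (B_below (1 / 2 ^ (p * k))) x"
  shows "eventually (\<lambda>r. ereal (1 - 2 / real p) < hit_ratio M T (B r) x) (at_right 0)"
proof -
  have "eventually (\<lambda>r. measure M (B r) < 1 / 2 ^ (p * (K + p))) (at_right 0)"
    using order_tendstoD(2)[OF measure_B_tendsto_0] by simp
  then show ?thesis
    using eventually_at_right_less[of 0]
  proof eventually_elim
    case (elim r)
    define c where "c = measure M (B r)"
    have "0 < c" using measure_B_pos elim unfolding c_def by simp
    then obtain k where k: "K + p \<le> k" "1 / 2 ^ (p * (k + 1)) < c" "c \<le> 1 / 2 ^ (p * k)"
      using dyadic_bracket_lt[of c p "K + p"] p elim unfolding c_def by auto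
    have "B r \<subseteq> B_below (1 / 2 ^ (p * k))"
      using k(3) unfolding c_def by (rule B_subset_B_below)
    then have "hit_time T (B_below (1 / 2 ^ (p * k))) x \<le> hit_time T (B r) x"
      by (rule hit_time_antimono)
    with K[of k] k(1) have hit: "enat (2 ^ ((p - 1) * k)) < hit_time T (B r) x" by simp
    show ?case
    proof (cases "hit_time T (B r) x")
      case (enat m)
      with hit have "2 ^ ((p - 1) * k) < m" by simp
      moreover have "p \<le> k" using k(1) by simp
      ultimately have "1 - 2 / real p < ln (real m) / - ln c"
        using ln_ratio_gt_of_dyadic[OF p] k(2,3) by blast
      then show ?thesis unfolding hit_ratio_enat[OF enat] c_def by simp
    qed (simp add: hit_ratio_infinity)
  qed
qed

lemma AE_eventually_hit_ratio_gt:
  fixes p :: nat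
  assumes p: "2 \<le> p"
  shows "AE x in M. eventually (\<lambda>r. ereal (1 - 2 / real p) < hit_ratio M T (B r) x) (at_right 0)"
proof -
  from p have "1 \<le> p" by simp
  from AE_eventually_hit_time_B_below_gt[OF this] show ?thesis
  proof (rule eventually_mono)
    fix x
    assume "eventually
      (\<lambda>k. enat (2 ^ ((p - 1) * k)) < hit_time T (B_below (1 / 2 ^ (p * k))) x) sequentially"
    then obtain K where "\<And>k. K \<le> k \<Longrightarrow>
        enat (2 ^ ((p - 1) * k)) < hit_time T (B_below (1 / 2 ^ (p * k))) x"
      unfolding eventually_sequentially by blast
    then show "eventually (\<lambda>r. ereal (1 - 2 / real p) < hit_ratio M T (B r) x) (at_right 0)"
      by (rule eventually_hit_ratio_gt[OF p])
  qed
qed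

lemma AE_one_le_Liminf_hit_ratio:
  "AE x in M. 1 \<le> Liminf (at_right 0) (\<lambda>\<rho>. hit_ratio M T (B \<rho>) x)"
proof -
  have "AE x in M. \<forall>p::nat. 2 \<le> p \<longrightarrow>
      eventually (\<lambda>\<rho>. ereal (1 - 2 / real p) < hit_ratio M T (B \<rho>) x) (at_right 0)"
    unfolding AE_all_countable
  proof
    fix p :: nat
    show "AE x in M. 2 \<le> p \<longrightarrow>
        eventually (\<lambda>\<rho>. ereal (1 - 2 / real p) < hit_ratio M T (B \<rho>) x) (at_right 0)"
      by (cases "2 \<le> p") (auto elim: eventually_mono dest: AE_eventually_hit_ratio_gt)
  qed
  then show ?thesis
  proof (rule eventually_mono)
    fix x
    assume ev: "\<forall>p::nat. 2 \<le> p \<longrightarrow>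
      eventually (\<lambda>\<rho>. ereal (1 - 2 / real p) < hit_ratio M T (B \<rho>) x) (at_right 0)"
    show "1 \<le> Liminf (at_right 0) (\<lambda>\<rho>. hit_ratio M T (B \<rho>) x)"
      unfolding one_ereal_def
    proof (rule ereal_ge_if_ge_minus_inverse[where c = 2])
      fix p :: nat
      assume "2 \<le> p"
      with ev have "eventually (\<lambda>\<rho>. ereal (1 - 2 / real p) < hit_ratio M T (B \<rho>) x) (at_right 0)"
        by blast
      then show "ereal (1 - 2 / real p) \<le> Liminf (at_right 0) (\<lambda>\<rho>. hit_ratio M T (B \<rho>) x)"
        by (auto intro!: Liminf_bounded elim!: eventually_mono)
    qed
  qed
qed

end

section \<open>The upper bound for the lower limit\<close>

locale divergent_radii = shrinking_targets +
  fixes p :: nat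
  assumes p_pos: "1 \<le> p"
begin

definition \<mu> :: "nat \<Rightarrow> real" where
  "\<mu> k = measure M (B (1 / (real k + 1)))"

text \<open>\<open>small k n\<close> says \<open>\<mu> k \<le> (n + 1) powr (- p / (p + 1))\<close>: small enough to force a hitting
  ratio of at most \<open>1 + 1 / p\<close> at a visit, large enough for the measures to be non-summable.\<close>

definition small :: "nat \<Rightarrow> nat \<Rightarrow> bool" where
  "small k n \<longleftrightarrow> \<mu> k ^ (p + 1) * (real n + 1) ^ p \<le> 1"

definition K :: "nat \<Rightarrow> nat" where
  "K n = (LEAST k. small k n)"

definition r :: "nat \<Rightarrow> real" where
  "r n = 1 / (real (K n) + 1)"

lemma \<mu>_pos: "0 < \<mu> k"
  unfolding \<mu>_def by (rule measure_B_pos) simp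

lemma \<mu>_le_1: "\<mu> k \<le> 1"
  unfolding \<mu>_def by simp

lemma \<mu>_antimono: "k \<le> k' \<Longrightarrow> \<mu> k' \<le> \<mu> k"
  unfolding \<mu>_def using sets_B by (intro finite_measure_mono B_mono divide_left_mono) auto

lemma ex_\<mu>_less: "0 < e \<Longrightarrow> \<exists>k. \<mu> k < e"
proof -
  assume "0 < e"
  then obtain b where b: "0 < b" "\<And>r. 0 < r \<Longrightarrow> r < b \<Longrightarrow> measure M (B r) < e"
    using order_tendstoD(2)[OF measure_B_tendsto_0] unfolding eventually_at_right_field by blast
  obtain k where "inverse (real (Suc k)) < b" using reals_Archimedean[OF b(1)] by blast
  then have "1 / (real k + 1) < b" by (simp add: inverse_eq_divide add.commute)
  then show ?thesis unfolding \<mu>_def using b(2) by (intro exI[of _ k]) simp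
qed

lemma eventually_not_small: "eventually (\<lambda>n. \<not> small k n) sequentially"
proof -
  obtain N where N: "1 / \<mu> k ^ (p + 1) < real N" using reals_Archimedean2 by blast
  have "\<not> small k n" if "N \<le> n" for n
  proof -
    have "1 / \<mu> k ^ (p + 1) < real n + 1" using N that by linarith
    then have "1 < \<mu> k ^ (p + 1) * (real n + 1)" using \<mu>_pos[of k] by (simp add: field_simps)
    also have "\<dots> \<le> \<mu> k ^ (p + 1) * (real n + 1) ^ p"
      using p_pos \<mu>_pos[of k] by (intro mult_left_mono power_increasing[of 1 p, simplified]) auto
    finally show ?thesis unfolding small_def by simp
  qed
  then show ?thesis unfolding eventually_sequentially by blast
qed

lemma ex_small: "\<exists>k. small k n"
proof -
  obtain k where k: "\<mu> k < 1 / (real n + 1) ^ p" using ex_\<mu>_less by fastforce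
  have "\<mu> k ^ (p + 1) \<le> \<mu> k"
    using \<mu>_pos[of k] \<mu>_le_1[of k] power_decreasing[of 1 "p + 1" "\<mu> k"] by simp
  then have "\<mu> k ^ (p + 1) * (real n + 1) ^ p \<le> \<mu> k * (real n + 1) ^ p"
    by (intro mult_right_mono) auto
  also have "\<dots> \<le> 1" using k by (simp add: field_simps)
  finally show ?thesis unfolding small_def by blast
qed

lemma small_K: "small (K n) n"
  unfolding K_def by (rule LeastI_ex[OF ex_small])

lemma small_antimono: "small k n' \<Longrightarrow> n \<le> n' \<Longrightarrow> small k n"
  unfolding small_def
  by (rule order_trans[rotated], assumption, intro mult_left_mono power_mono) (auto simp: \<mu>_pos less_imp_le)

lemma K_mono: "n \<le> n' \<Longrightarrow> K n \<le> K n'"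
  unfolding K_def[of n] by (rule Least_le) (rule small_antimono[OF small_K])

lemma K_tendsto_top: "filterlim K at_top sequentially"
  unfolding filterlim_at_top
proof
  fix k
  have "eventually (\<lambda>n. \<forall>j\<in>{..<k}. \<not> small j n) sequentially"
    using eventually_not_small by (intro eventually_ball_finite) auto
  then show "eventually (\<lambda>n. k \<le> K n) sequentially"
  proof (rule eventually_mono)
    fix n
    assume "\<forall>j\<in>{..<k}. \<not> small j n"
    then show "k \<le> K n" using small_K[of n] by (cases "K n < k") auto
  qed
qed

lemma r_tendsto_0: "filterlim r (at_right 0) sequentially"
proof -
  have "(\<lambda>k. 1 / (real k + 1)) \<longlonglongrightarrow> 0"
    using LIMSEQ_inverse_real_of_nat by (simp add: inverse_eq_divide add.commute)
  from filterlim_compose[OF this K_tendsto_top] have "r \<longlonglongrightarrow> 0"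
    unfolding r_def by simp
  then show ?thesis unfolding filterlim_at r_def by simp
qed

lemma B_r_decreasing: "B (r (Suc n)) \<subseteq> B (r n)"
  unfolding r_def using K_mono[of n "Suc n"] by (intro B_mono divide_left_mono) auto

lemma measure_B_r: "measure M (B (r n)) = \<mu> (K n)"
  unfolding r_def \<mu>_def by simp

text \<open>Up to the first \<open>N\<close> with \<open>\<not> small k N\<close> all terms are at least \<open>\<mu> k\<close>, and
  \<open>((N + 1) \<mu> k) ^ p > 1 / \<mu> k\<close> is unbounded as \<open>\<mu> k \<rightarrow> 0\<close>.\<close>

lemma sum_measure_B_r_unbounded: "\<exists>N. b < (\<Sum>n<N. measure M (B (r n)))"
proof -
  define D where "D = max b 0"
  have "0 < 1 / (D + 1) ^ p" unfolding D_def by simp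
  then obtain k where k: "\<mu> k < 1 / (D + 1) ^ p" using ex_\<mu>_less by blast
  have "\<exists>N. \<not> small k N"
    using eventually_not_small[of k] unfolding eventually_sequentially by blast
  define N where "N = (LEAST N. \<not> small k N)"
  have N: "\<not> small k N"
    unfolding N_def by (rule LeastI_ex) fact
  have "\<mu> k \<le> measure M (B (r n))" if "n < N" for n
  proof -
    have "small k n" using not_less_Least[OF that[unfolded N_def]] by blast
    then have "K n \<le> k" unfolding K_def by (rule Least_le)
    then show ?thesis unfolding measure_B_r by (rule \<mu>_antimono)
  qed
  then have "real N * \<mu> k \<le> (\<Sum>n<N. measure M (B (r n)))"
    using sum_mono[of "{..<N}" "\<lambda>_. \<mu> k"] by simp
  moreover have "D + 1 < (real N + 1) * \<mu> k"
  proof (rule power_less_imp_less_base[of _ p])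
    have "(D + 1) ^ p < 1 / \<mu> k" using k \<mu>_pos[of k] D_def by (simp add: field_simps)
    also have "1 / \<mu> k < ((real N + 1) * \<mu> k) ^ p"
    proof -
      have "\<mu> k ^ (p + 1) * (real N + 1) ^ p = ((real N + 1) * \<mu> k) ^ p * \<mu> k"
        by (simp add: power_mult_distrib mult_ac)
      with N have "1 < ((real N + 1) * \<mu> k) ^ p * \<mu> k"
        unfolding small_def by linarith
      then show ?thesis unfolding pos_divide_less_eq[OF \<mu>_pos] .
    qed
    finally show "(D + 1) ^ p < ((real N + 1) * \<mu> k) ^ p" .
  qed (use \<mu>_pos[of k] in simp)
  ultimately have "b < (\<Sum>n<N. measure M (B (r n)))"
    using \<mu>_le_1[of k] unfolding D_def by (simp add: algebra_simps)
  then show ?thesis by blast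
qed

lemma suminf_emeasure_B_r: "(\<Sum>n. emeasure M (B (r n))) = \<infinity>"
proof -
  have "(\<Sum>n. ennreal (measure M (B (r n)))) = \<infinity>"
    by (rule suminf_ennreal_eq_top_if_unbounded) (use sum_measure_B_r_unbounded in auto)
  moreover have "emeasure M (B (r n)) = ennreal (measure M (B (r n)))" for n
    by (rule emeasure_eq_measure)
  ultimately show ?thesis by simp
qed

lemma hit_ratio_le_at_visit:
  assumes "1 \<le> n" and "(T ^^ n) x \<in> B (r n)"
  shows "hit_ratio M T (B (r n)) x \<le> ereal (1 + 1 / real p)"
proof -
  have "hit_time T (B (r n)) x \<le> enat n"
    unfolding hit_time_le_enat_iff using assms by blast
  then obtain m where m: "hit_time T (B (r n)) x = enat m" "m \<le> n"
    by (cases "hit_time T (B (r n)) x") auto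
  have "ln (real m) / - ln (\<mu> (K n)) \<le> 1 + 1 / real p"
    using \<mu>_pos p_pos hit_time_ge_1[OF m(1)] m(2) small_K[of n, unfolded small_def]
    by (rule ln_ratio_le_of_power_bound)
  then show ?thesis unfolding hit_ratio_enat[OF m(1)] measure_B_r by simp
qed

end

context shrinking_targets
begin

lemma AE_frequently_hit_ratio_le:
  assumes BC: "\<And>r. (\<forall>n. B (r (Suc n)) \<subseteq> B (r n)) \<and> (\<Sum>n. emeasure M (B (r n))) = \<infinity> \<Longrightarrow>
      measure M {x. \<exists>\<^sub>\<infinity> n. x \<in> (T ^^ n) -` B (r n)} = 1"
    and p: "1 \<le> p"
  shows "AE x in M. \<exists>\<^sub>F \<rho> in at_right 0. hit_ratio M T (B \<rho>) x \<le> ereal (1 + 1 / real p)"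
proof -
  interpret divergent_radii M T B p by unfold_locales (fact p)
  have "measure M {x. \<exists>\<^sub>\<infinity> n. x \<in> (T ^^ n) -` B (r n)} = 1"
    by (rule BC) (simp add: B_r_decreasing suminf_emeasure_B_r)
  then have "AE x in M. x \<in> {x. \<exists>\<^sub>\<infinity> n. x \<in> (T ^^ n) -` B (r n)}"
    by (rule AE_prob_1)
  then show ?thesis
  proof (rule eventually_mono)
    fix x
    assume "x \<in> {x. \<exists>\<^sub>\<infinity> n. x \<in> (T ^^ n) -` B (r n)}"
    then have "\<exists>\<^sub>F n in sequentially. (T ^^ n) x \<in> B (r n)"
      by (simp add: cofinite_eq_sequentially)
    then have "\<exists>\<^sub>F n in sequentially. 1 \<le> n \<and> (T ^^ n) x \<in> B (r n)"
      using eventually_ge_at_top[of "1::nat"] by (rule frequently_eventually_conj)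
    then have "\<exists>\<^sub>F n in sequentially. hit_ratio M T (B (r n)) x \<le> ereal (1 + 1 / real p)"
      by (rule frequently_elim1) (simp add: hit_ratio_le_at_visit)
    then show "\<exists>\<^sub>F \<rho> in at_right 0. hit_ratio M T (B \<rho>) x \<le> ereal (1 + 1 / real p)"
      by (rule frequently_filterlim_compose[OF r_tendsto_0])
  qed
qed

lemma AE_Liminf_hit_ratio_le_1:
  assumes "\<And>r. (\<forall>n. B (r (Suc n)) \<subseteq> B (r n)) \<and> (\<Sum>n. emeasure M (B (r n))) = \<infinity> \<Longrightarrow>
      measure M {x. \<exists>\<^sub>\<infinity> n. x \<in> (T ^^ n) -` B (r n)} = 1"
  shows "AE x in M. Liminf (at_right 0) (\<lambda>\<rho>. hit_ratio M T (B \<rho>) x) \<le> 1"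
proof -
  have "AE x in M. \<forall>p::nat. 1 \<le> p \<longrightarrow>
      (\<exists>\<^sub>F \<rho> in at_right 0. hit_ratio M T (B \<rho>) x \<le> ereal (1 + 1 / real p))"
    unfolding AE_all_countable
  proof
    fix p :: nat
    show "AE x in M. 1 \<le> p \<longrightarrow>
        (\<exists>\<^sub>F \<rho> in at_right 0. hit_ratio M T (B \<rho>) x \<le> ereal (1 + 1 / real p))"
    proof (cases "1 \<le> p")
      case True
      show ?thesis
        using AE_frequently_hit_ratio_le[OF assms True] by (auto elim: eventually_mono)
    qed simp
  qed
  then show ?thesis
  proof (rule eventually_mono)
    fix x
    assume fr: "\<forall>p::nat. 1 \<le> p \<longrightarrow>
      (\<exists>\<^sub>F \<rho> in at_right 0. hit_ratio M T (B \<rho>) x \<le> ereal (1 + 1 / real p))"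
    show "Liminf (at_right 0) (\<lambda>\<rho>. hit_ratio M T (B \<rho>) x) \<le> 1"
      unfolding one_ereal_def
    proof (rule ereal_le_if_le_plus_inverse[where c = 1])
      fix p :: nat
      assume "1 \<le> p"
      with fr show "Liminf (at_right 0) (\<lambda>\<rho>. hit_ratio M T (B \<rho>) x) \<le> ereal (1 + 1 / real p)"
        by (intro Liminf_le_if_frequently) auto
    qed
  qed
qed


lemma AE_Liminf_hit_ratio_eq_1:
  assumes "\<And>r. (\<forall>n. B (r (Suc n)) \<subseteq> B (r n)) \<and> (\<Sum>n. emeasure M (B (r n))) = \<infinity> \<Longrightarrow>
      measure M {x. \<exists>\<^sub>\<infinity> n. x \<in> (T ^^ n) -` B (r n)} = 1"
  shows "AE x in M. Liminf (at_right 0) (\<lambda>\<rho>. hit_ratio M T (B \<rho>) x) = 1"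
proof -
  have "AE x in M. Liminf (at_right 0) (\<lambda>\<rho>. hit_ratio M T (B \<rho>) x) \<le> 1"
    by (rule AE_Liminf_hit_ratio_le_1) (fact assms)
  with AE_one_le_Liminf_hit_ratio show ?thesis
    by eventually_elim (rule antisym)
qed

end

section \<open>The upper bound for the upper limit\<close>

locale right_continuous_targets = shrinking_targets +
  assumes B_right_continuous: "\<And>s. (\<Inter>n. B (s + 1 / (real n + 1))) = B s"

locale dyadic_blocks = right_continuous_targets +
  fixes p :: nat
  assumes p_pos: "1 \<le> p"
begin

abbreviation F :: "real \<Rightarrow> real" where
  "F \<rho> \<equiv> measure M (B \<rho>)"

definition lev :: "nat \<Rightarrow> real" where
  "lev k = 1 / 2 ^ (p * k)"

definition level_met :: "nat \<Rightarrow> bool" where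
  "level_met k \<longleftrightarrow> (\<exists>\<rho>>0. lev k \<le> F \<rho> \<and> F \<rho> < 2 ^ p * lev k)"

definition \<sigma> :: "nat \<Rightarrow> real" where
  "\<sigma> k = Inf {\<rho>. 0 < \<rho> \<and> lev k \<le> F \<rho>}"

definition next_met :: "nat \<Rightarrow> nat" where
  "next_met j = (LEAST k. j \<le> k \<and> level_met k)"

text \<open>The times \<open>n \<in> [2 ^ ((p + 1) k), 2 ^ ((p + 1) (k + 1)))\<close> form block \<open>k\<close>; on it the
  radius is \<open>\<sigma> k'\<close> for the first met level \<open>k' \<ge> k\<close>, whose ball has measure in
  \<open>[lev k', 2 ^ p lev k')\<close> by right continuity.\<close>

definition block :: "nat \<Rightarrow> nat" where
  "block n = floor_log n div (p + 1)"

definition block_times :: "nat \<Rightarrow> nat set" where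
  "block_times k = {2 ^ ((p + 1) * k)..<2 ^ ((p + 1) * (k + 1))}"

definition r :: "nat \<Rightarrow> real" where
  "r n = \<sigma> (next_met (block n))"

lemma F_mono: "\<rho> \<le> \<rho>' \<Longrightarrow> F \<rho> \<le> F \<rho>'"
  using B_mono sets_B by (intro finite_measure_mono) auto

lemma lev_pos: "0 < lev k"
  unfolding lev_def by simp

lemma lev_antimono: "k \<le> k' \<Longrightarrow> lev k' \<le> lev k"
  unfolding lev_def by (intro divide_left_mono power_increasing) auto

lemma lev_Suc: "2 ^ p * lev (Suc k) = lev k"
  unfolding lev_def by (simp add: power_add)

lemma
  assumes "level_met k"
  shows \<sigma>_le: "\<And>\<rho>. 0 < \<rho> \<Longrightarrow> lev k \<le> F \<rho> \<Longrightarrow> \<sigma> k \<le> \<rho>"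
    and F_\<sigma>_less: "F (\<sigma> k) < 2 ^ p * lev k"
    and F_\<sigma>_ge: "lev k \<le> F (\<sigma> k)"
proof -
  define S where "S = {\<rho>. 0 < \<rho> \<and> lev k \<le> F \<rho>}"
  obtain \<rho>0 where \<rho>0: "0 < \<rho>0" "lev k \<le> F \<rho>0" "F \<rho>0 < 2 ^ p * lev k"
    using assms unfolding level_met_def by blast
  have ne: "S \<noteq> {}" using \<rho>0 unfolding S_def by auto
  have bdd: "bdd_below S" unfolding S_def by (rule bdd_belowI[of _ 0]) auto
  show le: "\<sigma> k \<le> \<rho>" if "0 < \<rho>" "lev k \<le> F \<rho>" for \<rho>
    unfolding \<sigma>_def S_def[symmetric] using that bdd by (intro cInf_lower) (auto simp: S_def)
  show "F (\<sigma> k) < 2 ^ p * lev k"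
    using le[OF \<rho>0(1,2)] F_mono \<rho>0(3) by (meson le_less_trans)
  have "lev k \<le> F (\<sigma> k + 1 / (real n + 1))" for n
  proof -
    have "Inf S < \<sigma> k + 1 / (real n + 1)" unfolding \<sigma>_def S_def by simp
    then obtain \<rho> where "\<rho> \<in> S" "\<rho> < \<sigma> k + 1 / (real n + 1)"
      using cInf_less_iff[OF ne bdd] by blast
    then show ?thesis using F_mono[of \<rho> "\<sigma> k + 1 / (real n + 1)"] by (auto simp: S_def)
  qed
  moreover have "decseq (\<lambda>n. B (\<sigma> k + 1 / (real n + 1)))"
    unfolding decseq_def by (auto intro!: B_mono divide_left_mono)
  then have "(\<lambda>n. F (\<sigma> k + 1 / (real n + 1))) \<longlonglongrightarrow> F (\<sigma> k)"
    using finite_Lim_measure_decseq[of "\<lambda>n. B (\<sigma> k + 1 / (real n + 1))"] sets_B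
    unfolding B_right_continuous by auto
  ultimately show "lev k \<le> F (\<sigma> k)"
    by (intro LIMSEQ_le_const) auto
qed

lemma ex_level_met: "\<exists>k\<ge>j. level_met k"
proof -
  obtain b where b: "0 < b" "\<And>\<rho>. 0 < \<rho> \<Longrightarrow> \<rho> < b \<Longrightarrow> F \<rho> < lev j"
    using order_tendstoD(2)[OF measure_B_tendsto_0 lev_pos] unfolding eventually_at_right_field
    by blast
  define \<rho> where "\<rho> = b / 2"
  have \<rho>: "0 < \<rho>" "F \<rho> < 1 / 2 ^ (p * j)" using b unfolding \<rho>_def lev_def by auto
  then obtain k where k: "j \<le> k" "1 / 2 ^ (p * (k + 1)) \<le> F \<rho>" "F \<rho> < 1 / 2 ^ (p * k)"
    using dyadic_bracket_le[of "F \<rho>" p j] measure_B_pos p_pos by auto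
  then have "level_met (Suc k)"
    unfolding level_met_def using \<rho>(1) lev_Suc[of k] unfolding lev_def by auto
  then show ?thesis using k(1) by (intro exI[of _ "Suc k"]) auto
qed

lemma next_met: "j \<le> next_met j" "level_met (next_met j)"
proof -
  have "j \<le> next_met j \<and> level_met (next_met j)"
    unfolding next_met_def by (rule LeastI_ex) (use ex_level_met in blast)
  then show "j \<le> next_met j" "level_met (next_met j)" by auto
qed

lemma next_met_eq: "level_met k \<Longrightarrow> next_met k = k"
  unfolding next_met_def by (rule Least_equality) auto

lemma next_met_mono: "j \<le> j' \<Longrightarrow> next_met j \<le> next_met j'"
  unfolding next_met_def[of j] using next_met[of j'] by (intro Least_le) auto

lemma \<sigma>_antimono:
  assumes "level_met k" "level_met k'" "k \<le> k'"
  shows "\<sigma> k' \<le> \<sigma> k"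
proof -
  have "{\<rho>. 0 < \<rho> \<and> lev k \<le> F \<rho>} \<noteq> {}"
    using assms(1) unfolding level_met_def by auto
  moreover have "{\<rho>. 0 < \<rho> \<and> lev k \<le> F \<rho>} \<subseteq> {\<rho>. 0 < \<rho> \<and> lev k' \<le> F \<rho>}"
    using lev_antimono[OF assms(3)] by auto
  ultimately show ?thesis
    unfolding \<sigma>_def by (intro cInf_superset_mono) (auto intro: bdd_belowI[of _ 0])
qed

lemma block_eq: "n \<in> block_times k \<Longrightarrow> block n = k"
proof -
  assume "n \<in> block_times k"
  then have n: "2 ^ ((p + 1) * k) \<le> n" "n < 2 ^ ((p + 1) * (k + 1))"
    unfolding block_times_def by auto
  then have "0 < n" using less_le_trans[of 0 "2 ^ ((p + 1) * k)" n] by simp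
  define l where "l = floor_log n"
  have l: "2 ^ l \<le> n" "n < 2 * 2 ^ l"
    unfolding l_def using floor_log_exp2_le[OF \<open>0 < n\<close>] floor_log_exp2_gt by auto
  have "(2::nat) ^ ((p + 1) * k) < 2 ^ Suc l" using n(1) l(2) by simp
  then have "(p + 1) * k < Suc l"
    using power_less_imp_less_exp[of "2::nat" "(p + 1) * k" "Suc l"] by simp
  moreover have "(2::nat) ^ l < 2 ^ ((p + 1) * (k + 1))" using l(1) n(2) by simp
  then have "l < (p + 1) * (k + 1)"
    using power_less_imp_less_exp[of "2::nat" l "(p + 1) * (k + 1)"] by simp
  ultimately show ?thesis
    unfolding block_def l_def[symmetric] by (intro div_nat_eqI) auto
qed

lemma block_mono: "n \<le> n' \<Longrightarrow> block n \<le> block n'"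
  unfolding block_def by (intro div_le_mono floor_log_le_iff)

lemma r_antimono: "n \<le> n' \<Longrightarrow> r n' \<le> r n"
  unfolding r_def using next_met next_met_mono block_mono by (intro \<sigma>_antimono) auto

lemma F_r_pos: "0 < F (r n)"
  unfolding r_def using F_\<sigma>_ge[OF next_met(2)] lev_pos by (meson less_le_trans)

lemma F_r_less: "F (r n) < 2 ^ p * lev (block n)"
proof -
  have "F (r n) < 2 ^ p * lev (next_met (block n))"
    unfolding r_def by (rule F_\<sigma>_less[OF next_met(2)])
  also have "\<dots> \<le> 2 ^ p * lev (block n)"
    using lev_antimono[OF next_met(1)] by simp
  finally show ?thesis .
qed

lemma r_eq_\<sigma>: "level_met k \<Longrightarrow> n \<in> block_times k \<Longrightarrow> r n = \<sigma> k"
  unfolding r_def by (simp add: block_eq next_met_eq)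

lemma card_block_times:
  "real (card (block_times k)) = 2 ^ ((p + 1) * k) * (2 ^ (p + 1) - 1)"
proof -
  have "(2::nat) ^ ((p + 1) * (k + 1)) = 2 ^ ((p + 1) * k) * 2 ^ (p + 1)"
    by (simp flip: power_add add: algebra_simps)
  then show ?thesis
    unfolding block_times_def by (simp add: of_nat_diff algebra_simps)
qed

lemma dyadic_block_mass: "2 ^ ((p + 1) * k) * lev k = 2 ^ k"
proof -
  have "(p + 1) * k = p * k + k" by simp
  then have "(2::real) ^ ((p + 1) * k) = 2 ^ (p * k) * 2 ^ k" by (simp only: power_add)
  then show ?thesis unfolding lev_def by simp
qed

lemma sum_block_le: "(\<Sum>n\<in>block_times k. F (r n)) \<le> 2 ^ (2 * p + 1) * 2 ^ k"
proof -
  have "(\<Sum>n\<in>block_times k. F (r n)) \<le> real (card (block_times k)) * (2 ^ p * lev k)"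
    using F_r_less block_eq by (intro sum_bounded_above) (auto intro: less_imp_le)
  also have "\<dots> \<le> 2 ^ ((p + 1) * k) * 2 ^ (p + 1) * (2 ^ p * lev k)"
    unfolding card_block_times using lev_pos[of k] by (intro mult_right_mono) auto
  also have "\<dots> = (2 ^ ((p + 1) * k) * lev k) * (2 ^ (p + 1) * 2 ^ p)"
    by (simp only: mult_ac)
  also have "\<dots> = 2 ^ (2 * p + 1) * 2 ^ k"
  proof -
    have "2 * p + 1 = (p + 1) + p" by simp
    then have "(2::real) ^ (2 * p + 1) = 2 ^ (p + 1) * 2 ^ p" by (simp only: power_add)
    then show ?thesis unfolding dyadic_block_mass by simp
  qed
  finally show ?thesis .
qed

lemma sum_block_ge:
  assumes "level_met k"
  shows "2 ^ p * 2 ^ k \<le> (\<Sum>n\<in>block_times k. F (r n))"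
proof -
  have "2 ^ p * 2 ^ k = 2 ^ ((p + 1) * k) * 2 ^ p * lev k"
    using dyadic_block_mass[of k] by (simp add: mult_ac)
  also have "\<dots> \<le> real (card (block_times k)) * lev k"
    unfolding card_block_times using lev_pos[of k]
    by (intro mult_right_mono) (auto simp: algebra_simps)
  also have "\<dots> \<le> (\<Sum>n\<in>block_times k. F (r n))"
    using F_\<sigma>_ge[OF assms] r_eq_\<sigma>[OF assms] by (intro sum_bounded_below) auto
  finally show ?thesis .
qed

lemma sum_prefix_le: "(\<Sum>n\<in>{1..<2 ^ ((p + 1) * k)}. F (r n)) \<le> 2 ^ (2 * p + 1) * (2 ^ k - 1)"
proof (induction k)
  case (Suc k)
  have le: "(1::nat) \<le> 2 ^ ((p + 1) * k)" "(2::nat) ^ ((p + 1) * k) \<le> 2 ^ ((p + 1) * (k + 1))"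
    by (simp, rule power_increasing, auto)
  have "(\<Sum>n\<in>{1..<2 ^ ((p + 1) * (k + 1))}. F (r n))
      = (\<Sum>n\<in>{1..<2 ^ ((p + 1) * k)}. F (r n)) + (\<Sum>n\<in>block_times k. F (r n))"
    unfolding block_times_def by (rule sum.atLeastLessThan_concat[OF le, symmetric])
  also have "\<dots> \<le> 2 ^ (2 * p + 1) * (2 ^ k - 1) + 2 ^ (2 * p + 1) * 2 ^ k"
    using Suc.IH sum_block_le[of k] by linarith
  also have "\<dots> = 2 ^ (2 * p + 1) * (2 ^ (k + 1) - 1)"
    by (simp add: algebra_simps)
  finally show ?case unfolding Suc_eq_plus1 .
qed simp

lemma sum_prefix_le_block_mass:
  "(\<Sum>n\<in>{1..<2 ^ ((p + 1) * k)}. F (r n)) \<le> 2 * 2 ^ p * (2 ^ p * 2 ^ k)"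
proof -
  have "2 * p + 1 = p + p + 1" by simp
  then have pow: "(2::real) ^ (2 * p + 1) = 2 * 2 ^ p * 2 ^ p"
    by (simp only: power_add power_one_right mult_ac)
  have "(\<Sum>n\<in>{1..<2 ^ ((p + 1) * k)}. F (r n)) \<le> 2 ^ (2 * p + 1) * (2 ^ k - 1)"
    by (rule sum_prefix_le)
  also have "\<dots> \<le> 2 ^ (2 * p + 1) * 2 ^ k" by simp
  also have "\<dots> = 2 * 2 ^ p * (2 ^ p * 2 ^ k)" unfolding pow by (simp add: mult_ac)
  finally show ?thesis .
qed

lemma B_r_decreasing: "B (r (Suc n)) \<subseteq> B (r n)"
  using r_antimono[of n "Suc n"] B_mono by simp

lemma suminf_emeasure_B_r: "(\<Sum>n. emeasure M (B (r n))) = \<infinity>"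
proof -
  have "\<exists>N. b < (\<Sum>n<N. F (r n))" for b
  proof -
    obtain j where j: "b < 2 ^ j" using real_arch_pow[of 2 b] by auto
    define k where "k = next_met j"
    have "(2::real) ^ j \<le> 2 ^ k"
      using next_met(1)[of j] unfolding k_def by (intro power_increasing) auto
    also have "\<dots> \<le> 2 ^ p * 2 ^ k" by simp
    also have "\<dots> \<le> (\<Sum>n\<in>block_times k. F (r n))"
      unfolding k_def by (rule sum_block_ge[OF next_met(2)])
    also have "\<dots> \<le> (\<Sum>n<2 ^ ((p + 1) * (k + 1)). F (r n))"
      using F_r_pos by (intro sum_mono2) (auto simp: block_times_def intro: less_imp_le)
    finally show ?thesis using j by (intro exI[of _ "2 ^ ((p + 1) * (k + 1))"]) simp
  qed
  then have "(\<Sum>n. ennreal (F (r n))) = \<infinity>"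
    by (rule suminf_ennreal_eq_top_if_unbounded[rotated]) simp
  moreover have "emeasure M (B (r n)) = ennreal (F (r n))" for n
    by (rule emeasure_eq_measure)
  ultimately show ?thesis by simp
qed

lemma hit_time_of_visit_in_block:
  assumes "n \<in> block_times k" and "(T ^^ n) x \<in> A"
  obtains m where "hit_time T A x = enat m" "1 \<le> m" "m < 2 ^ ((p + 1) * (k + 1))"
proof -
  have n: "2 ^ ((p + 1) * k) \<le> n" "n < 2 ^ ((p + 1) * (k + 1))"
    using assms(1) unfolding block_times_def by auto
  have "1 \<le> n" using order_trans[OF one_le_power[of "2::nat"] n(1)] by simp
  with assms(2) have "hit_time T A x \<le> enat n"
    unfolding hit_time_le_enat_iff by blast
  then obtain m where "hit_time T A x = enat m" "m \<le> n"
    by (cases "hit_time T A x") auto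
  with n(2) hit_time_ge_1 show ?thesis using that by fastforce
qed

definition visits :: "'a \<Rightarrow> nat \<Rightarrow> real" where
  "visits x N = (\<Sum>n\<in>{1..N}. indicator ((T ^^ n) -` B (r n)) x)"

definition mass :: "nat \<Rightarrow> real" where
  "mass N = (\<Sum>n\<in>{1..N}. F (r n))"

text \<open>Comparing \<open>visits\<close> with \<open>mass\<close> at both ends of block \<open>k\<close> leaves more visits inside
  the block than the prefix can account for: the block carries mass at least \<open>2 ^ p 2 ^ k\<close>,
  the prefix at most \<open>2 ^ (2 p + 1) 2 ^ k\<close>.\<close>

lemma visit_in_block:
  assumes close: "\<And>N. N0 \<le> N \<Longrightarrow>
      (1 - 1 / 2 ^ (p + 4)) * mass N < visits x N \<and> visits x N < (1 + 1 / 2 ^ (p + 4)) * mass N"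
    and met: "level_met k" and big: "N0 + 2 \<le> 2 ^ ((p + 1) * k)"
  shows "\<exists>n\<in>block_times k. (T ^^ n) x \<in> B (\<sigma> k)"
proof -
  define h :: "nat \<Rightarrow> real" where "h n = indicator ((T ^^ n) -` B (r n)) x" for n
  define M0 :: nat where "M0 = 2 ^ ((p + 1) * k)"
  define N1 :: nat where "N1 = 2 ^ ((p + 1) * (k + 1))"
  have le: "1 \<le> M0" "M0 \<le> N1"
    unfolding M0_def N1_def by (simp, rule power_increasing, auto)
  have blk: "block_times k = {M0..<N1}" unfolding block_times_def M0_def N1_def ..
  have split: "(\<Sum>n\<in>{1..<N1}. g n) = (\<Sum>n\<in>{1..<M0}. g n) + (\<Sum>n\<in>block_times k. g n)"
    for g :: "nat \<Rightarrow> real"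
    unfolding blk by (rule sum.atLeastLessThan_concat[OF le, symmetric])
  have N1: "N0 \<le> N1 - 1" and M0: "N0 \<le> M0 - 1" using big le unfolding M0_def by auto
  have sets: "{1..N1 - 1} = {1..<N1}" "{1..M0 - 1} = {1..<M0}" using le by auto
  have upper: "(1 - 1 / 2 ^ (p + 4)) * (\<Sum>n\<in>{1..<N1}. F (r n)) < (\<Sum>n\<in>{1..<N1}. h n)"
    using conjunct1[OF close[OF N1]] unfolding mass_def visits_def sets(1) h_def .
  have lower: "(\<Sum>n\<in>{1..<M0}. h n) < (1 + 1 / 2 ^ (p + 4)) * (\<Sum>n\<in>{1..<M0}. F (r n))"
    using conjunct2[OF close[OF M0]] unfolding mass_def visits_def sets(2) h_def .
  have "0 < (\<Sum>n\<in>block_times k. h n)"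
  proof (rule pos_of_perturbed_sums[where A = "2 ^ p * 2 ^ k" and c = "2 * 2 ^ p"
        and S = "\<Sum>n\<in>{1..<M0}. F (r n)" and Bk = "\<Sum>n\<in>block_times k. F (r n)"
        and HS = "\<Sum>n\<in>{1..<M0}. h n"])
    show "2 ^ p * 2 ^ k \<le> (\<Sum>n\<in>block_times k. F (r n))"
      by (rule sum_block_ge[OF met])
    show "(\<Sum>n\<in>{1..<M0}. F (r n)) \<le> 2 * 2 ^ p * (2 ^ p * 2 ^ k)"
      unfolding M0_def by (rule sum_prefix_le_block_mass)
    have "(2::real) \<le> 2 ^ (p + 4)" using power_increasing[of 1 "p + 4" "2::real"] by simp
    then show "1 / 2 ^ (p + 4) \<le> (1 / 2 :: real)" by (intro divide_left_mono) auto
    show "2 * (1 / 2 ^ (p + 4)) * (2 * 2 ^ p) \<le> (1 / 4 :: real)" by (simp add: power_add)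
    show "(1 - 1 / 2 ^ (p + 4)) * ((\<Sum>n\<in>{1..<M0}. F (r n)) + (\<Sum>n\<in>block_times k. F (r n)))
        < (\<Sum>n\<in>{1..<M0}. h n) + (\<Sum>n\<in>block_times k. h n)"
      using upper unfolding split .
  qed (use lower in simp_all)
  then obtain n where n: "n \<in> block_times k" "h n \<noteq> 0"
    by (metis less_irrefl sum.neutral)
  then have "(T ^^ n) x \<in> B (r n)" unfolding h_def by (simp split: split_indicator_asm)
  with n(1) show ?thesis using r_eq_\<sigma>[OF met] by auto
qed

lemma eventually_hit_ratio_less:
  assumes close: "\<And>N. N0 \<le> N \<Longrightarrow>
      (1 - 1 / 2 ^ (p + 4)) * mass N < visits x N \<and> visits x N < (1 + 1 / 2 ^ (p + 4)) * mass N"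
  shows "eventually (\<lambda>\<rho>. hit_ratio M T (B \<rho>) x < ereal (1 + 2 / real p)) (at_right 0)"
proof -
  define K where "K = N0 + 2 * p + 2"
  have "eventually (\<lambda>\<rho>. F \<rho> < 1 / 2 ^ (p * K)) (at_right 0)"
    using order_tendstoD(2)[OF measure_B_tendsto_0] by simp
  then show ?thesis
    using eventually_at_right_less[of 0]
  proof eventually_elim
    case (elim \<rho>)
    have F0: "0 < F \<rho>" using measure_B_pos elim by simp
    then obtain k where k: "K \<le> k" "1 / 2 ^ (p * (k + 1)) \<le> F \<rho>" "F \<rho> < 1 / 2 ^ (p * k)"
      using dyadic_bracket_le[of "F \<rho>" p K] p_pos elim by auto
    have met: "level_met (Suc k)"
      unfolding level_met_def using elim k(2,3) lev_Suc[of k] unfolding lev_def by auto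
    have "N0 + 2 \<le> Suc k" using k(1) unfolding K_def by simp
    also have "Suc k < 2 ^ Suc k" by (rule less_exp)
    also have "(2::nat) ^ Suc k \<le> 2 ^ ((p + 1) * Suc k)" by (rule power_increasing) auto
    finally have "N0 + 2 \<le> 2 ^ ((p + 1) * Suc k)" by simp
    then obtain n where n: "n \<in> block_times (Suc k)" "(T ^^ n) x \<in> B (\<sigma> (Suc k))"
      using visit_in_block[OF close met] by blast
    have "\<sigma> (Suc k) \<le> \<rho>"
      using \<sigma>_le[OF met] elim k(2) unfolding lev_def by simp
    with n(2) have "(T ^^ n) x \<in> B \<rho>" using B_mono by blast
    with n(1) obtain m where m: "hit_time T (B \<rho>) x = enat m" "1 \<le> m"
        "m < 2 ^ ((p + 1) * (Suc k + 1))"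
      by (rule hit_time_of_visit_in_block)
    have "2 * p + 2 \<le> k" using k(1) unfolding K_def by simp
    moreover have "m < 2 ^ ((p + 1) * (k + 2))" using m(3) by simp
    ultimately have "ln (real m) / - ln (F \<rho>) < 1 + 2 / real p"
      using ln_ratio_lt_of_dyadic[OF p_pos _ m(2) _ F0 k(3)] by blast
    then show ?case unfolding hit_ratio_enat[OF m(1)] by simp
  qed
qed

lemma AE_eventually_hit_ratio_less:
  assumes "strongly_BC M T (\<lambda>n. B (r n))"
  shows "AE x in M. eventually (\<lambda>\<rho>. hit_ratio M T (B \<rho>) x < ereal (1 + 2 / real p)) (at_right 0)"
proof -
  have mass_pos: "eventually (\<lambda>N. 0 < mass N) sequentially"
    using eventually_ge_at_top[of 1] unfolding mass_def
    by eventually_elim (auto intro!: sum_pos F_r_pos)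
  have "AE x in M. (\<lambda>N. visits x N / mass N) \<longlonglongrightarrow> 1"
    using assms unfolding strongly_BC_def visits_def mass_def .
  then show ?thesis
  proof (rule eventually_mono)
    fix x
    assume "(\<lambda>N. visits x N / mass N) \<longlonglongrightarrow> 1"
    from eventually_bounds_of_ratio_tendsto_1[OF this mass_pos, of "1 / 2 ^ (p + 4)"]
    obtain N0 where "\<And>N. N0 \<le> N \<Longrightarrow>
        (1 - 1 / 2 ^ (p + 4)) * mass N < visits x N \<and> visits x N < (1 + 1 / 2 ^ (p + 4)) * mass N"
      unfolding eventually_sequentially by auto
    then show "eventually (\<lambda>\<rho>. hit_ratio M T (B \<rho>) x < ereal (1 + 2 / real p)) (at_right 0)"
      by (rule eventually_hit_ratio_less)
  qed
qed

end

context right_continuous_targets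
begin

lemma AE_Limsup_hit_ratio_le_1:
  assumes SBC: "\<And>r. (\<forall>n. B (r (Suc n)) \<subseteq> B (r n)) \<and> (\<Sum>n. emeasure M (B (r n))) = \<infinity> \<Longrightarrow>
      strongly_BC M T (\<lambda>n. B (r n))"
  shows "AE x in M. Limsup (at_right 0) (\<lambda>\<rho>. hit_ratio M T (B \<rho>) x) \<le> 1"
proof -
  have "AE x in M. \<forall>p::nat. 1 \<le> p \<longrightarrow>
      eventually (\<lambda>\<rho>. hit_ratio M T (B \<rho>) x < ereal (1 + 2 / real p)) (at_right 0)"
    unfolding AE_all_countable
  proof
    fix p :: nat
    show "AE x in M. 1 \<le> p \<longrightarrow>
        eventually (\<lambda>\<rho>. hit_ratio M T (B \<rho>) x < ereal (1 + 2 / real p)) (at_right 0)"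
    proof (cases "1 \<le> p")
      case True
      interpret dyadic_blocks M T B p by unfold_locales (fact True)
      have "strongly_BC M T (\<lambda>n. B (r n))"
        by (rule SBC) (simp add: B_r_decreasing suminf_emeasure_B_r)
      then show ?thesis by (auto elim: eventually_mono dest: AE_eventually_hit_ratio_less)
    qed simp
  qed
  then show ?thesis
  proof (rule eventually_mono)
    fix x
    assume ev: "\<forall>p::nat. 1 \<le> p \<longrightarrow>
      eventually (\<lambda>\<rho>. hit_ratio M T (B \<rho>) x < ereal (1 + 2 / real p)) (at_right 0)"
    show "Limsup (at_right 0) (\<lambda>\<rho>. hit_ratio M T (B \<rho>) x) \<le> 1"
      unfolding one_ereal_def
    proof (rule ereal_le_if_le_plus_inverse[where c = 2])
      fix p :: nat
      assume "1 \<le> p"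
      with ev have "eventually (\<lambda>\<rho>. hit_ratio M T (B \<rho>) x < ereal (1 + 2 / real p)) (at_right 0)"
        by blast
      then show "Limsup (at_right 0) (\<lambda>\<rho>. hit_ratio M T (B \<rho>) x) \<le> ereal (1 + 2 / real p)"
        by (auto intro!: Limsup_bounded elim!: eventually_mono)
    qed
  qed
qed


lemma AE_hit_ratio_tendsto_1:
  assumes "\<And>r. (\<forall>n. B (r (Suc n)) \<subseteq> B (r n)) \<and> (\<Sum>n. emeasure M (B (r n))) = \<infinity> \<Longrightarrow>
      strongly_BC M T (\<lambda>n. B (r n))"
  shows "AE x in M. ((\<lambda>\<rho>. hit_ratio M T (B \<rho>) x) \<longlongrightarrow> 1) (at_right 0)"
proof -
  have "AE x in M. Limsup (at_right 0) (\<lambda>\<rho>. hit_ratio M T (B \<rho>) x) \<le> 1"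
    by (rule AE_Limsup_hit_ratio_le_1) (fact assms)
  with AE_one_le_Liminf_hit_ratio show ?thesis
    by eventually_elim (rule tendsto_if_le_Liminf_Limsup_le, simp_all)
qed

end

section \<open>Balls\<close>

lemma shrinking_targets_if_subset_cball:
  fixes M :: "'a::metric_space measure" and B :: "real \<Rightarrow> 'a set"
  assumes mps: "mp_system M T" and borel: "sets M = sets borel"
    and no_atoms: "\<And>x. measure M {x} = 0"
    and cball: "\<And>r. B r \<subseteq> cball y r" and sets_B: "\<And>r. B r \<in> sets M"
    and mono: "\<And>r s. r \<le> s \<Longrightarrow> B r \<subseteq> B s" and pos: "\<And>r. 0 < r \<Longrightarrow> 0 < measure M (B r)"
  shows "shrinking_targets M T B"
proof (rule shrinking_targets.intro[OF mps], unfold_locales)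
  interpret mp_system M T by (fact mps)
  have "(\<Inter>n. B (1 / (real n + 1))) \<subseteq> (\<Inter>n. cball y (1 / (real n + 1)))"
    by (intro INF_mono' cball)
  also have "\<dots> = {y}" using Inter_cball_shrinking[of y 0] by simp
  finally have "measure M (\<Inter>n. B (1 / (real n + 1))) \<le> measure M {y}"
    using borel by (intro finite_measure_mono) auto
  then have "measure M (\<Inter>n. B (1 / (real n + 1))) = 0"
    using no_atoms[of y] measure_nonneg[of M "\<Inter>n. B (1 / (real n + 1))"] by linarith
  then show "((\<lambda>r. measure M (B r)) \<longlongrightarrow> 0) (at_right 0)"
    using sets_B mono by (intro measure_tendsto_0_at_right_0) auto
qed (use sets_B mono pos in auto)

lemma shrinking_targets_ball:
  fixes M :: "'a::metric_space measure"
  assumes "mp_system M T" and "sets M = sets borel" and "\<And>x. measure M {x} = 0"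
    and "\<forall>\<epsilon>>0. 0 < measure M (ball y \<epsilon>)"
  shows "shrinking_targets M T (ball y)"
  using assms by (intro shrinking_targets_if_subset_cball[where y = y]) auto

lemma right_continuous_targets_cball:
  fixes M :: "'a::metric_space measure"
  assumes "mp_system M T" and "sets M = sets borel" and "\<And>x. measure M {x} = 0"
    and "\<forall>\<epsilon>>0. 0 < measure M (cball y \<epsilon>)"
  shows "right_continuous_targets M T (cball y)"
proof (rule right_continuous_targets.intro)
  show "shrinking_targets M T (cball y)"
    using assms by (intro shrinking_targets_if_subset_cball[where y = y]) auto
  show "right_continuous_targets_axioms (cball y)"
    by unfold_locales (rule Inter_cball_shrinking)
qed

theorem theorem2p4:
  fixes M :: "'a::metric_space measure" and T :: "'a \<Rightarrow> 'a"
  assumes prob: "prob_space M"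
    and borel: "sets M = sets borel"
    and no_atoms: "\<And>x. measure M {x} = 0"
    and meas: "T \<in> M \<rightarrow>\<^sub>M M"
    and preserving: "distr M M T = M"
  shows
    "((\<forall>y (r :: nat \<Rightarrow> real).
         (\<forall>n. ball y (r (Suc n)) \<subseteq> ball y (r n)) \<and>
         (\<Sum>n. emeasure M (ball y (r n))) = \<infinity> \<longrightarrow>
         measure M {x. \<exists>\<^sub>\<infinity> n. x \<in> (T ^^ n) -` ball y (r n)} = 1)
      \<longrightarrow> (\<forall>y. (\<forall>\<epsilon>>0. measure M (ball y \<epsilon>) > 0) \<longrightarrow>
             (AE x in M. Liminf (at_right 0) (\<lambda>\<rho>. hit_ratio M T (ball y \<rho>) x) = 1)))
     \<and>
     ((\<forall>y (r :: nat \<Rightarrow> real).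
         (\<forall>n. cball y (r (Suc n)) \<subseteq> cball y (r n)) \<and>
         (\<Sum>n. emeasure M (cball y (r n))) = \<infinity> \<longrightarrow>
         strongly_BC M T (\<lambda>n. cball y (r n)))
      \<longrightarrow> (\<forall>y. (\<forall>\<epsilon>>0. measure M (cball y \<epsilon>) > 0) \<longrightarrow>
             (AE x in M. ((\<lambda>\<rho>. hit_ratio M T (cball y \<rho>) x) \<longlongrightarrow> 1) (at_right 0))))"
proof -
  have mps: "mp_system M T"
    using prob meas preserving sets_eq_imp_space_eq[OF borel]
    by (simp add: mp_system_def mp_system_axioms_def)
  show ?thesis
  proof (intro conjI impI allI)
    fix y :: 'a
    assume BC: "\<forall>y (r :: nat \<Rightarrow> real). (\<forall>n. ball y (r (Suc n)) \<subseteq> ball y (r n)) \<and>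
        (\<Sum>n. emeasure M (ball y (r n))) = \<infinity> \<longrightarrow>
        measure M {x. \<exists>\<^sub>\<infinity> n. x \<in> (T ^^ n) -` ball y (r n)} = 1"
      and "\<forall>\<epsilon>>0. 0 < measure M (ball y \<epsilon>)"
    then interpret shrinking_targets M T "ball y"
      by (intro shrinking_targets_ball[OF mps borel no_atoms])
    show "AE x in M. Liminf (at_right 0) (\<lambda>\<rho>. hit_ratio M T (ball y \<rho>) x) = 1"
      by (rule AE_Liminf_hit_ratio_eq_1) (use BC in blast)
  next
    fix y :: 'a
    assume SBC: "\<forall>y (r :: nat \<Rightarrow> real). (\<forall>n. cball y (r (Suc n)) \<subseteq> cball y (r n)) \<and>
        (\<Sum>n. emeasure M (cball y (r n))) = \<infinity> \<longrightarrow> strongly_BC M T (\<lambda>n. cball y (r n))"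
      and "\<forall>\<epsilon>>0. 0 < measure M (cball y \<epsilon>)"
    then interpret right_continuous_targets M T "cball y"
      by (intro right_continuous_targets_cball[OF mps borel no_atoms])
    show "AE x in M. ((\<lambda>\<rho>. hit_ratio M T (cball y \<rho>) x) \<longlongrightarrow> 1) (at_right 0)"
      by (rule AE_hit_ratio_tendsto_1) (use SBC in blast)
  qed
qed

end
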